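(* Let $r\geq 3$. If a $3$-connected $r$-graph $G$ has a $3$-vertex-cut $S$ such that $G-S$ contains at least three components of odd order, then either $G$ has a non-trivial tight edge-cut or the underlying simple graph $G_s$ is isomorphic to $K_{3,3}$.
   Context: Graphs are finite, may have parallel edges but no loops. $\partial_G(X)$ is the set of edges with exactly one end in $X\subseteq V(G)$. An $r$-graph is an $r$-regular graph $G$ with $|\partial_G(X)|\geq r$ for every $X\subseteq V(G)$ of odd cardinality. An edge-cut $\partial_G(X)$ of an $r$-graph $G$ is a non-trivial tight edge-cut if $|X|$ is odd, $|\partial_G(X)|=r$, and $|X|>1$ and $|V(G)\setminus X|>1$. $G_s$ is the underlying simple graph of $G$. A $3$-vertex-cut is a set of $3$ vertices whose removal increases the number of components. *)

theory Defs
  imports Main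
begin

text \<open>Parallel edges are
  distinct elements of E with the same ends.\<close>

definition multigraph :: "'a set \<Rightarrow> 'b set \<Rightarrow> ('b \<Rightarrow> 'a set) \<Rightarrow> bool" where
  "multigraph V E ends \<longleftrightarrow> finite V \<and> finite E \<and>
     (\<forall>e\<in>E. ends e \<subseteq> V \<and> card (ends e) = 2)"

definition degree :: "'b set \<Rightarrow> ('b \<Rightarrow> 'a set) \<Rightarrow> 'a \<Rightarrow> nat" where
  "degree E ends v = card {e\<in>E. v \<in> ends e}"

definition edge_cut :: "'b set \<Rightarrow> ('b \<Rightarrow> 'a set) \<Rightarrow> 'a set \<Rightarrow> 'b set" where
  "edge_cut E ends X = {e\<in>E. card (ends e \<inter> X) = 1}"

definition r_graph :: "nat \<Rightarrow> 'a set \<Rightarrow> 'b set \<Rightarrow> ('b \<Rightarrow> 'a set) \<Rightarrow> bool" where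
  "r_graph r V E ends \<longleftrightarrow> multigraph V E ends \<and>
     (\<forall>v\<in>V. degree E ends v = r) \<and>
     (\<forall>X. X \<subseteq> V \<longrightarrow> odd (card X) \<longrightarrow> card (edge_cut E ends X) \<ge> r)"

definition nontrivial_tight_cut :: "nat \<Rightarrow> 'a set \<Rightarrow> 'b set \<Rightarrow> ('b \<Rightarrow> 'a set) \<Rightarrow> 'a set \<Rightarrow> bool" where
  "nontrivial_tight_cut r V E ends X \<longleftrightarrow> X \<subseteq> V \<and> odd (card X) \<and>
     card (edge_cut E ends X) = r \<and> card X > 1 \<and> card (V - X) > 1"

definition adj :: "'b set \<Rightarrow> ('b \<Rightarrow> 'a set) \<Rightarrow> 'a \<Rightarrow> 'a \<Rightarrow> bool" where
  "adj E ends u v \<longleftrightarrow> (\<exists>e\<in>E. ends e = {u, v})"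

definition reach_in :: "'b set \<Rightarrow> ('b \<Rightarrow> 'a set) \<Rightarrow> 'a set \<Rightarrow> ('a \<times> 'a) set" where
  "reach_in E ends W = {(u, v). u \<in> W \<and> v \<in> W \<and> adj E ends u v}\<^sup>*"

definition components :: "'b set \<Rightarrow> ('b \<Rightarrow> 'a set) \<Rightarrow> 'a set \<Rightarrow> 'a set set" where
  "components E ends W = (\<lambda>x. {y\<in>W. (x, y) \<in> reach_in E ends W}) ` W"

definition connected_on :: "'b set \<Rightarrow> ('b \<Rightarrow> 'a set) \<Rightarrow> 'a set \<Rightarrow> bool" where
  "connected_on E ends W \<longleftrightarrow> card (components E ends W) = 1"

definition k_connected :: "nat \<Rightarrow> 'a set \<Rightarrow> 'b set \<Rightarrow> ('b \<Rightarrow> 'a set) \<Rightarrow> bool" where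
  "k_connected k V E ends \<longleftrightarrow> card V > k \<and>
     (\<forall>S. S \<subseteq> V \<longrightarrow> card S < k \<longrightarrow> connected_on E ends (V - S))"

definition three_vertex_cut :: "'a set \<Rightarrow> 'b set \<Rightarrow> ('b \<Rightarrow> 'a set) \<Rightarrow> 'a set \<Rightarrow> bool" where
  "three_vertex_cut V E ends S \<longleftrightarrow> S \<subseteq> V \<and> card S = 3 \<and>
     card (components E ends (V - S)) > card (components E ends V)"

definition simple_is_K33 :: "'a set \<Rightarrow> 'b set \<Rightarrow> ('b \<Rightarrow> 'a set) \<Rightarrow> bool" where
  "simple_is_K33 V E ends \<longleftrightarrow> (\<exists>A B. A \<inter> B = {} \<and> A \<union> B = V \<and> card A = 3 \<and> card B = 3 \<and>
     (\<forall>u\<in>V. \<forall>v\<in>V. adj E ends u v \<longleftrightarrow> (u \<in> A \<and> v \<in> B) \<or> (u \<in> B \<and> v \<in> A)))"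

end

theory Submission
  imports Defs
begin

(*
  Let K be the set of odd components of G - S. Every edge of a cut \<partial>(C), C \<in> K, has
  exactly one end in S, and these cuts are pairwise disjoint; since each has at least r edges
  while the degrees in S add up to 3r, |K| \<ge> 3 forces |K| = 3, every \<partial>(C) to be tight, and
  every edge at S to lie in one of these cuts. An odd component with more than one vertex is
  then a non-trivial tight cut. Otherwise, since G is connected, every component of G - S
  reaches S and so belongs to K: G - S consists of three isolated vertices, S is independent,
  and 3-connectivity makes each of the three outer vertices adjacent to every vertex of S.
*)

lemma adj_sym: "adj E ends u v \<Longrightarrow> adj E ends v u"
  by (auto simp: adj_def insert_commute)

lemma adj_neq:
  assumes "multigraph V E ends" "adj E ends u v"
  shows "u \<noteq> v"
proof
  assume "u = v"
  with assms(2) obtain e where "e \<in> E" "ends e = {u}"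
    unfolding adj_def by auto
  with assms(1) show False
    unfolding multigraph_def by fastforce
qed

lemma reach_in_sym:
  assumes "(x, y) \<in> reach_in E ends W"
  shows "(y, x) \<in> reach_in E ends W"
proof -
  let ?R = "{(u, v). u \<in> W \<and> v \<in> W \<and> adj E ends u v}"
  have "?R\<inverse> = ?R"
    by (auto simp: adj_def insert_commute)
  have "(y, x) \<in> (?R\<inverse>)\<^sup>*"
    using assms unfolding reach_in_def by (rule rtrancl_converseI)
  with \<open>?R\<inverse> = ?R\<close> show ?thesis
    unfolding reach_in_def by simp
qed

lemma reach_in_trans:
  "(x, y) \<in> reach_in E ends W \<Longrightarrow> (y, z) \<in> reach_in E ends W \<Longrightarrow> (x, z) \<in> reach_in E ends W"
  unfolding reach_in_def by (rule rtrancl_trans)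

lemma components_subset: "C \<in> components E ends W \<Longrightarrow> C \<subseteq> W"
  unfolding components_def by auto

lemma finite_components: "finite W \<Longrightarrow> finite (components E ends W)"
  unfolding components_def by simp

lemma component_exists:
  assumes "x \<in> W"
  obtains C where "C \<in> components E ends W" "x \<in> C"
proof
  show "{y\<in>W. (x, y) \<in> reach_in E ends W} \<in> components E ends W"
    unfolding components_def using assms by blast
  show "x \<in> {y\<in>W. (x, y) \<in> reach_in E ends W}"
    unfolding reach_in_def using assms by simp
qed

lemma components_nonempty:
  assumes "C \<in> components E ends W"
  obtains x where "x \<in> C"
proof -
  obtain x where "x \<in> W" "C = {y\<in>W. (x, y) \<in> reach_in E ends W}"
    using assms unfolding components_def by blast
  then have "x \<in> C"
    unfolding reach_in_def by simp
  then show thesis ..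
qed

lemma components_adj_closed:
  assumes "C \<in> components E ends W" "u \<in> C" "w \<in> W" "adj E ends u w"
  shows "w \<in> C"
proof -
  obtain x where C: "C = {y\<in>W. (x, y) \<in> reach_in E ends W}"
    using assms(1) unfolding components_def by auto
  have "(x, u) \<in> reach_in E ends W"
    using assms(2) C by simp
  moreover have "(u, w) \<in> reach_in E ends W"
    unfolding reach_in_def using assms(2-4) C by auto
  ultimately have "(x, w) \<in> reach_in E ends W"
    by (rule reach_in_trans)
  with assms(3) show ?thesis
    unfolding C by simp
qed

lemma components_eqI:
  assumes "C1 \<in> components E ends W" "C2 \<in> components E ends W" "z \<in> C1" "z \<in> C2"
  shows "C1 = C2"
proof -
  obtain x1 x2 where C: "C1 = {y\<in>W. (x1, y) \<in> reach_in E ends W}"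
    "C2 = {y\<in>W. (x2, y) \<in> reach_in E ends W}"
    using assms(1,2) unfolding components_def by auto
  have "(x1, z) \<in> reach_in E ends W" "(x2, z) \<in> reach_in E ends W"
    using assms(3,4) C by auto
  then have "(x1, x2) \<in> reach_in E ends W" "(x2, x1) \<in> reach_in E ends W"
    by (metis reach_in_sym reach_in_trans)+
  then show ?thesis
    unfolding C by (blast intro: reach_in_trans)
qed

lemma adj_closed_subset_not_connected:
  assumes "D \<subseteq> W" "x \<in> D" "y \<in> W - D"
    and closed: "\<And>u w. u \<in> D \<Longrightarrow> w \<in> W \<Longrightarrow> adj E ends u w \<Longrightarrow> w \<in> D"
  shows "\<not> connected_on E ends W"
proof
  assume "connected_on E ends W"
  then obtain C where single: "components E ends W = {C}"
    unfolding connected_on_def by (metis One_nat_def card_1_singleton_iff)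
  then have "C \<in> components E ends W"
    by simp
  then obtain z where C: "C = {v\<in>W. (z, v) \<in> reach_in E ends W}"
    unfolding components_def by blast
  have "v \<in> C" if "v \<in> W" for v
    using component_exists[OF that] single by blast
  then have "(z, x) \<in> reach_in E ends W" "(z, y) \<in> reach_in E ends W"
    using assms(1-3) C by auto
  then have "(x, y) \<in> reach_in E ends W"
    using reach_in_sym reach_in_trans by metis
  then have "y \<in> D"
    unfolding reach_in_def
  proof (induction rule: rtrancl_induct)
    case (step v w)
    then show ?case
      using closed by blast
  qed (rule assms(2))
  with assms(3) show False by simp
qed

lemma component_adj_separator:
  assumes "connected_on E ends (V - T)" "T \<subseteq> S" "S \<subseteq> V" "S - T \<noteq> {}"
    and D: "D \<in> components E ends (V - S)"
  shows "\<exists>u\<in>D. \<exists>s\<in>S - T. adj E ends u s"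
proof (rule ccontr)
  assume no_adj: "\<not> ?thesis"
  obtain x where "x \<in> D"
    using D by (rule components_nonempty)
  moreover obtain s where "s \<in> S - T"
    using assms(4) by blast
  moreover have "D \<subseteq> V - S"
    using D by (rule components_subset)
  moreover have "w \<in> D" if "u \<in> D" "w \<in> V - T" "adj E ends u w" for u w
  proof (cases "w \<in> S")
    case True
    with that no_adj show ?thesis by blast
  next
    case False
    with that show ?thesis
      using components_adj_closed[OF D] by blast
  qed
  ultimately have "\<not> connected_on E ends (V - T)"
    using assms(2,3) by (intro adj_closed_subset_not_connected[of D _ _ "s"]) auto
  with assms(1) show False by contradiction
qed

lemma edge_cut_component_ends:
  assumes "multigraph V E ends" "C \<in> components E ends (V - S)" "e \<in> edge_cut E ends C"
  obtains a b where "ends e = {a, b}" "a \<in> C" "b \<in> S"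
proof -
  have e: "e \<in> E" "card (ends e \<inter> C) = 1"
    using assms(3) unfolding edge_cut_def by auto
  then obtain a where a: "ends e \<inter> C = {a}"
    by (metis One_nat_def card_1_singleton_iff)
  obtain x y where xy: "ends e = {x, y}" "x \<noteq> y" "ends e \<subseteq> V"
    using assms(1) e(1) unfolding multigraph_def by (metis card_2_iff)
  define b where "b = (if a = x then y else x)"
  have ab: "ends e = {a, b}" "a \<noteq> b"
    using a xy unfolding b_def by auto
  then have "b \<notin> C" "b \<in> V" "a \<in> C"
    using a xy(3) by auto
  moreover have "adj E ends a b"
    unfolding adj_def using e(1) ab(1) by blast
  ultimately have "b \<in> S"
    using components_adj_closed[OF assms(2)] by blast
  with ab(1) \<open>a \<in> C\<close> show thesis ..
qed

lemma edge_cut_components_disjoint: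
  assumes "multigraph V E ends" "C1 \<in> components E ends (V - S)" "C2 \<in> components E ends (V - S)"
    and "C1 \<noteq> C2"
  shows "edge_cut E ends C1 \<inter> edge_cut E ends C2 = {}"
proof (rule ccontr)
  assume "edge_cut E ends C1 \<inter> edge_cut E ends C2 \<noteq> {}"
  then obtain e where e1: "e \<in> edge_cut E ends C1" and e2: "e \<in> edge_cut E ends C2"
    by blast
  obtain a b where ab: "ends e = {a, b}" "a \<in> C1" "b \<in> S"
    using assms(1,2) e1 by (rule edge_cut_component_ends)
  have "card (ends e \<inter> C2) = 1"
    using e2 unfolding edge_cut_def by simp
  then obtain z where "z \<in> ends e \<inter> C2"
    by (metis card.empty ex_in_conv zero_neq_one)
  moreover have "b \<notin> C2"
    using components_subset[OF assms(3)] ab(3) by blast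
  ultimately have "a \<in> C2"
    using ab(1) by auto
  then have "C1 = C2"
    using components_eqI[OF assms(2,3) ab(2)] by blast
  with assms(4) show False ..
qed

lemma sum_degree_eq_sum_card_ends:
  assumes "finite E" "finite S"
  shows "(\<Sum>s\<in>S. degree E ends s) = (\<Sum>e\<in>E. card (ends e \<inter> S))"
proof -
  have "(\<Sum>s\<in>S. degree E ends s) = (\<Sum>s\<in>S. \<Sum>e\<in>E. of_bool (s \<in> ends e))"
    unfolding degree_def using assms by (simp add: Int_def)
  also have "\<dots> = (\<Sum>e\<in>E. \<Sum>s\<in>S. of_bool (s \<in> ends e))"
    by (rule sum.swap)
  also have "\<dots> = (\<Sum>e\<in>E. card (ends e \<inter> S))"
    using assms by (simp add: Int_commute Int_def)
  finally show ?thesis .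
qed

lemma sum_degree_separator_eq:
  assumes G: "multigraph V E ends" and "S \<subseteq> V" "K \<subseteq> components E ends (V - S)"
  shows "(\<Sum>s\<in>S. degree E ends s) = (\<Sum>C\<in>K. card (edge_cut E ends C)) +
    (\<Sum>e\<in>E - (\<Union>C\<in>K. edge_cut E ends C). card (ends e \<inter> S))"
proof -
  let ?U = "\<Union>C\<in>K. edge_cut E ends C"
  have fin: "finite V" "finite E"
    using G unfolding multigraph_def by auto
  have "finite K"
    using finite_components[of "V - S" E ends] fin(1) assms(3) finite_subset by blast
  have U: "?U \<subseteq> E"
    unfolding edge_cut_def by blast
  have "card (ends e \<inter> S) = 1" if e: "e \<in> ?U" for e
  proof -
    obtain C where C: "C \<in> K" and e: "e \<in> edge_cut E ends C"
      using e by blast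
    then have C: "C \<in> components E ends (V - S)"
      using assms(3) by blast
    obtain a b where "ends e = {a, b}" "a \<in> C" "b \<in> S"
      using edge_cut_component_ends[OF G C e] .
    moreover have "C \<subseteq> V - S"
      using C by (rule components_subset)
    ultimately have "ends e \<inter> S = {b}"
      by auto
    then show ?thesis
      by simp
  qed
  then have "(\<Sum>e\<in>?U. card (ends e \<inter> S)) = card ?U"
    by simp
  also have "\<dots> = (\<Sum>C\<in>K. card (edge_cut E ends C))"
  proof (rule card_UN_disjoint)
    show "\<forall>C\<in>K. finite (edge_cut E ends C)"
      using fin(2) unfolding edge_cut_def by simp
    show "\<forall>C1\<in>K. \<forall>C2\<in>K. C1 \<noteq> C2 \<longrightarrow> edge_cut E ends C1 \<inter> edge_cut E ends C2 = {}"
      using edge_cut_components_disjoint[OF G] assms(3) by blast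
  qed fact
  finally have "(\<Sum>e\<in>E. card (ends e \<inter> S)) = (\<Sum>C\<in>K. card (edge_cut E ends C)) +
      (\<Sum>e\<in>E - ?U. card (ends e \<inter> S))"
    using sum.subset_diff[OF U fin(2), where g = "\<lambda>e. card (ends e \<inter> S)"] by simp
  moreover have "finite S"
    using fin(1) assms(2) finite_subset by blast
  ultimately show ?thesis
    using sum_degree_eq_sum_card_ends fin(2) by metis
qed

lemma sum_le_card_mult_imp_eq:
  fixes f :: "'a \<Rightarrow> nat"
  assumes "finite A" "\<And>x. x \<in> A \<Longrightarrow> c \<le> f x" "(\<Sum>x\<in>A. f x) \<le> card A * c" "x \<in> A"
  shows "f x = c"
proof -
  have "(\<Sum>x\<in>A. f x - c) = 0"
    using assms(2,3) sum_subtractf_nat[of A "\<lambda>_. c" f] by simp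
  then have "f x - c = 0"
    using assms(1,4) by simp
  with assms(2,4) show ?thesis
    by (meson diff_is_0_eq le_antisym)
qed

lemma r_graph_odd_components_tight:
  assumes G: "r_graph r V E ends" and "r > 0" "S \<subseteq> V"
    and K_def: "K = {C \<in> components E ends (V - S). odd (card C)}"
    and "card S \<le> card K"
  shows "card K = card S"
    and "\<forall>C\<in>K. card (edge_cut E ends C) = r"
    and "\<forall>e\<in>E. ends e \<inter> S \<noteq> {} \<longrightarrow> (\<exists>C\<in>K. e \<in> edge_cut E ends C)"
proof -
  let ?U = "\<Union>C\<in>K. edge_cut E ends C"
  let ?cuts = "\<Sum>C\<in>K. card (edge_cut E ends C)"
  let ?rest = "\<Sum>e\<in>E - ?U. card (ends e \<inter> S)"
  have mg: "multigraph V E ends" and fin: "finite V" "finite E"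
    and deg: "\<And>v. v \<in> V \<Longrightarrow> degree E ends v = r"
    and cut: "\<And>X. X \<subseteq> V \<Longrightarrow> odd (card X) \<Longrightarrow> card (edge_cut E ends X) \<ge> r"
    using G unfolding r_graph_def multigraph_def by auto
  have K: "K \<subseteq> components E ends (V - S)"
    unfolding K_def by blast
  have "finite K"
    using finite_components[of "V - S" E ends] fin(1) K finite_subset by blast
  have "(\<Sum>s\<in>S. degree E ends s) = card S * r"
    using deg assms(3) by (simp add: subset_iff)
  then have total: "card S * r = ?cuts + ?rest"
    using sum_degree_separator_eq[OF mg assms(3) K] by simp
  have cut_K: "r \<le> card (edge_cut E ends C)" if "C \<in> K" for C
  proof -
    have C: "C \<in> components E ends (V - S)" "odd (card C)"
      using that unfolding K_def by auto
    then have "C \<subseteq> V"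
      using components_subset by blast
    then show ?thesis
      using C(2) by (rule cut)
  qed
  then have "card K * r \<le> ?cuts"
    using sum_mono[of K "\<lambda>_. r"] by simp
  moreover have "card S * r \<le> card K * r"
    using assms(5) by simp
  ultimately have cuts: "?cuts = card K * r" and rest: "?rest = 0"
    and "card K * r = card S * r"
    using total by linarith+
  then show "card K = card S"
    using \<open>r > 0\<close> by simp
  show "\<forall>C\<in>K. card (edge_cut E ends C) = r"
    using sum_le_card_mult_imp_eq[of K r "\<lambda>C. card (edge_cut E ends C)"] \<open>finite K\<close> cut_K cuts
    by simp
  have "finite S"
    using fin(1) assms(3) by (rule finite_subset[rotated])
  have "card (ends e \<inter> S) = 0" if "e \<in> E - ?U" for e
    using rest that fin(2) by simp
  then have "ends e \<inter> S = {}" if "e \<in> E - ?U" for e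
    using that \<open>finite S\<close> by simp
  then show "\<forall>e\<in>E. ends e \<inter> S \<noteq> {} \<longrightarrow> (\<exists>C\<in>K. e \<in> edge_cut E ends C)"
    by blast
qed

lemma components_eq_if_edges_at_separator_covered:
  assumes G: "multigraph V E ends" and "connected_on E ends V" "S \<subseteq> V" "S \<noteq> {}"
    and K: "K \<subseteq> components E ends (V - S)"
    and covered: "\<forall>e\<in>E. ends e \<inter> S \<noteq> {} \<longrightarrow> (\<exists>C\<in>K. e \<in> edge_cut E ends C)"
  shows "components E ends (V - S) = K"
proof
  show "components E ends (V - S) \<subseteq> K"
  proof
    fix D assume D: "D \<in> components E ends (V - S)"
    have "connected_on E ends (V - {})"
      using assms(2) by simp
    then obtain u s where "u \<in> D" "s \<in> S" "adj E ends u s"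
      using component_adj_separator[OF _ _ assms(3) _ D] assms(4) by blast
    then obtain e where e: "e \<in> E" "ends e = {u, s}"
      unfolding adj_def by blast
    with \<open>s \<in> S\<close> covered obtain C where C: "C \<in> K" "e \<in> edge_cut E ends C"
      by blast
    then have C': "C \<in> components E ends (V - S)"
      using K by blast
    obtain a b where ab: "ends e = {a, b}" "a \<in> C" "b \<in> S"
      using edge_cut_component_ends[OF G C' C(2)] .
    have "a \<notin> S"
      using ab(2) components_subset[OF C'] by blast
    moreover have "a \<in> {u, s}"
      using ab(1) e(2) by blast
    ultimately have "a = u"
      using \<open>s \<in> S\<close> by blast
    then have "C = D"
      using components_eqI[OF C' D ab(2)] \<open>u \<in> D\<close> by blast
    with C(1) show "D \<in> K"
      by simp
  qed
qed (rule K)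

lemma no_adj_in_separator_if_edges_covered:
  assumes covered: "\<forall>e\<in>E. ends e \<inter> S \<noteq> {} \<longrightarrow> (\<exists>C\<in>components E ends (V - S). e \<in> edge_cut E ends C)"
    and "u \<in> S" "v \<in> S"
  shows "\<not> adj E ends u v"
proof
  assume "adj E ends u v"
  then obtain e where e: "e \<in> E" "ends e = {u, v}"
    unfolding adj_def by blast
  with assms(2) covered obtain C where C: "C \<in> components E ends (V - S)" "e \<in> edge_cut E ends C"
    by blast
  have "ends e \<inter> C = {}"
    using components_subset[OF C(1)] e(2) assms(2,3) by auto
  with C(2) show False
    unfolding edge_cut_def by simp
qed

lemma k_connected_imp_connected:
  assumes "0 < k" "k_connected k V E ends"
  shows "connected_on E ends V"
proof -
  have "\<forall>T. T \<subseteq> V \<longrightarrow> card T < k \<longrightarrow> connected_on E ends (V - T)"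
    using assms(2) unfolding k_connected_def by blast
  then have "connected_on E ends (V - {})"
    by (rule allE[of _ "{}"]) (simp add: assms(1))
  then show ?thesis
    by simp
qed

lemma nontrivial_tight_cut_if_component:
  assumes "finite V" "S \<subseteq> V" "1 < card S"
    and C: "C \<in> components E ends (V - S)" "odd (card C)" "1 < card C"
    and "card (edge_cut E ends C) = r"
  shows "nontrivial_tight_cut r V E ends C"
proof -
  have "C \<subseteq> V - S"
    using C(1) by (rule components_subset)
  then have "card S \<le> card (V - C)"
    using assms(1,2) by (intro card_mono) auto
  with \<open>C \<subseteq> V - S\<close> assms show ?thesis
    unfolding nontrivial_tight_cut_def by auto
qed

lemma simple_is_K33_if_singleton_components:
  assumes G: "multigraph V E ends" and conn: "k_connected 3 V E ends"
    and S: "S \<subseteq> V" "card S = 3"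
    and singletons: "\<And>C. C \<in> components E ends (V - S) \<Longrightarrow> card C = 1"
    and three: "card (components E ends (V - S)) = 3"
    and indep: "\<And>u v. u \<in> S \<Longrightarrow> v \<in> S \<Longrightarrow> \<not> adj E ends u v"
  shows "simple_is_K33 V E ends"
proof -
  have comps: "components E ends (V - S) = (\<lambda>c. {c}) ` (V - S)"
  proof (intro equalityI subsetI)
    fix C assume C: "C \<in> components E ends (V - S)"
    then obtain c where "C = {c}"
      using singletons by (metis One_nat_def card_1_singleton_iff)
    moreover have "c \<in> V - S"
      using components_subset[OF C] calculation by blast
    ultimately show "C \<in> (\<lambda>c. {c}) ` (V - S)"
      by blast
  next
    fix C assume "C \<in> (\<lambda>c. {c}) ` (V - S)"
    then obtain c where c: "c \<in> V - S" "C = {c}"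
      by blast
    obtain D where D: "D \<in> components E ends (V - S)" "c \<in> D"
      using component_exists[OF c(1)] .
    then obtain d where "D = {d}"
      using singletons by (metis One_nat_def card_1_singleton_iff)
    with D c(2) show "C \<in> components E ends (V - S)"
      by simp
  qed
  have "card (V - S) = 3"
    using three unfolding comps by (simp add: card_image)
  have within: "\<not> adj E ends u v" if "u \<in> V - S" "v \<in> V - S" for u v
  proof
    assume uv: "adj E ends u v"
    have "{u} \<in> components E ends (V - S)"
      using comps that(1) by blast
    then have "v = u"
      using components_adj_closed[OF _ _ that(2) uv] by blast
    with adj_neq[OF G uv] show False
      by simp
  qed
  have cross: "adj E ends c s" if "c \<in> V - S" "s \<in> S" for c s
  proof -
    have "card (S - {s}) < 3"
      using S that(2) by (simp add: card_Diff_singleton_if)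
    then have "connected_on E ends (V - (S - {s}))"
      using conn S(1) unfolding k_connected_def by blast
    moreover have "{c} \<in> components E ends (V - S)"
      using comps that(1) by blast
    ultimately have "\<exists>u\<in>{c}. \<exists>t\<in>S - (S - {s}). adj E ends u t"
      using that(2) S(1) by (intro component_adj_separator) auto
    then show ?thesis
      using that(2) by auto
  qed
  have "adj E ends u v \<longleftrightarrow> u \<in> S \<and> v \<in> V - S \<or> u \<in> V - S \<and> v \<in> S"
    if "u \<in> V" "v \<in> V" for u v
  proof (cases "u \<in> S"; cases "v \<in> S")
    assume "u \<in> S" "v \<notin> S"
    then show ?thesis
      using adj_sym[OF cross[of v u]] that by simp
  qed (use that indep within cross in auto)
  with S \<open>card (V - S) = 3\<close> show ?thesis
    unfolding simple_is_K33_def by (intro exI[of _ S] exI[of _ "V - S"]) auto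
qed

theorem lemma2p6:
  fixes r :: nat and V :: "'a set" and E :: "'b set" and ends :: "'b \<Rightarrow> 'a set" and S :: "'a set"
  assumes "r \<ge> 3"
    and "r_graph r V E ends"
    and "k_connected 3 V E ends"
    and "three_vertex_cut V E ends S"
    and "card {C \<in> components E ends (V - S). odd (card C)} \<ge> 3"
  shows "(\<exists>X. nontrivial_tight_cut r V E ends X) \<or> simple_is_K33 V E ends"
proof -
  define K where "K = {C \<in> components E ends (V - S). odd (card C)}"
  have G: "multigraph V E ends" "finite V"
    using assms(2) unfolding r_graph_def multigraph_def by auto
  have S: "S \<subseteq> V" "card S = 3"
    using assms(4) unfolding three_vertex_cut_def by auto
  have "card K = 3" and tight: "\<forall>C\<in>K. card (edge_cut E ends C) = r"
    and covered: "\<forall>e\<in>E. ends e \<inter> S \<noteq> {} \<longrightarrow> (\<exists>C\<in>K. e \<in> edge_cut E ends C)"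
    using r_graph_odd_components_tight[OF assms(2) _ S(1) K_def] assms(1,5) S(2)
    unfolding K_def by auto
  show ?thesis
  proof (cases "\<exists>C\<in>K. 1 < card C")
    case True
    then obtain C where "C \<in> components E ends (V - S)" "odd (card C)" "1 < card C"
      unfolding K_def by blast
    moreover have "card (edge_cut E ends C) = r"
      using tight calculation unfolding K_def by blast
    ultimately have "nontrivial_tight_cut r V E ends C"
      using G(2) S by (intro nontrivial_tight_cut_if_component) auto
    then show ?thesis
      by blast
  next
    case False
    have "connected_on E ends V" "S \<noteq> {}"
      using k_connected_imp_connected[OF _ assms(3)] S(2) by auto
    then have comps: "components E ends (V - S) = K"
      using components_eq_if_edges_at_separator_covered[OF G(1) _ S(1) _ _ covered]
      unfolding K_def by blast
    have "card C = 1" if "C \<in> components E ends (V - S)" for C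
    proof -
      have "odd (card C)" "\<not> 1 < card C"
        using that False unfolding comps by (auto simp: K_def)
      then show ?thesis
        by presburger
    qed
    moreover have "\<not> adj E ends u v" if "u \<in> S" "v \<in> S" for u v
      using no_adj_in_separator_if_edges_covered[of E ends S V] covered that comps by blast
    ultimately show ?thesis
      using simple_is_K33_if_singleton_components[OF G(1) assms(3) S] comps \<open>card K = 3\<close> by blast
  qed
qed

end
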